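(* Let $r,K,\mu$ satisfy Assumption 1, let $a_0:=\frac{\pi}{\sqrt{2(1-\mu)}}$ and $a>a_0$. Every positive solution $(w,m)\in C^0([-a,a])^2$ of the localized problem (P$_a$) with speed $c=0$ satisfies $$\max_{[-a_0,a_0]}(w+m)\ge \frac K2(1-\mu).$$
   Context: Assumption 1: $r\in(1,\infty)$, $\mu\in\left(0,\min\left(\frac r2,1-\frac1r,1-K,K\right)\right)$, $K\in\left(0,\min\left(1,\frac{r}{r-1}\left(1-\frac{\mu}{1-\mu}\right)\right)\right)$. $f_w(w,m):=w(1-(w+m))+\mu(m-w)$, $f_m(w,m):=rm\left(1-\frac{w+m}{K}\right)+\mu(w-m)$; $(w^*,m^* )$ is the unique solution in $(0,1)\times(0,K)$ of $f_w=f_m=0$. The localized problem (P$_a$) with speed $c$: $w,m\in C^0([-a,a])$ satisfy, in the weak sense on $(-a,a)$, $-cw'-w''=f_w(w,m)\chi_{w\ge0}\chi_{m\ge0}$, $-cm'-m''=f_m(w,m)\chi_{w\ge0}\chi_{m\ge0}$, with $w(-a)=w^*$, $m(-a)=m^*$, $w(a)=m(a)=0$. *)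

theory Defs
  imports "HOL-Analysis.Analysis"
begin

definition assumption1 :: "real \<Rightarrow> real \<Rightarrow> real \<Rightarrow> bool" where
  "assumption1 r K mu \<longleftrightarrow> 1 < r \<and> 0 < mu \<and> mu < r / 2 \<and> mu < 1 - 1 / r \<and> mu < 1 - K \<and> mu < K
     \<and> 0 < K \<and> K < 1 \<and> K < r / (r - 1) * (1 - mu / (1 - mu))"

definition f_w :: "real \<Rightarrow> real \<Rightarrow> real \<Rightarrow> real" where
  "f_w mu w m = w * (1 - (w + m)) + mu * (m - w)"

definition f_m :: "real \<Rightarrow> real \<Rightarrow> real \<Rightarrow> real \<Rightarrow> real \<Rightarrow> real" where
  "f_m r K mu w m = r * m * (1 - (w + m) / K) + mu * (w - m)"

definition chi :: "real \<Rightarrow> real \<Rightarrow> real" where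
  "chi w m = (if 0 \<le> w \<and> 0 \<le> m then 1 else 0)"

definition smooth_fun :: "(real \<Rightarrow> real) \<Rightarrow> bool" where
  "smooth_fun \<phi> \<longleftrightarrow> (\<forall>n x. ((deriv ^^ n) \<phi>) differentiable (at x))"

definition test_fun :: "real \<Rightarrow> (real \<Rightarrow> real) \<Rightarrow> bool" where
  "test_fun a \<phi> \<longleftrightarrow> smooth_fun \<phi> \<and> compact (closure {x. \<phi> x \<noteq> 0})
     \<and> closure {x. \<phi> x \<noteq> 0} \<subseteq> {-a<..<a}"

text \<open>u solves -c u' - u'' = F in the weak (distributional) sense on (-a,a).\<close>
definition weak_sol :: "real \<Rightarrow> real \<Rightarrow> (real \<Rightarrow> real) \<Rightarrow> (real \<Rightarrow> real) \<Rightarrow> bool" where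
  "weak_sol a c u F \<longleftrightarrow> (\<forall>\<phi>. test_fun a \<phi> \<longrightarrow>
     integral {-a..a} (\<lambda>x. u x * (c * deriv \<phi> x - deriv (deriv \<phi>) x)) = integral {-a..a} (\<lambda>x. F x * \<phi> x))"

definition solves_Pa :: "real \<Rightarrow> real \<Rightarrow> real \<Rightarrow> real \<Rightarrow> real \<Rightarrow> real \<Rightarrow> real
     \<Rightarrow> (real \<Rightarrow> real) \<Rightarrow> (real \<Rightarrow> real) \<Rightarrow> bool" where
  "solves_Pa r K mu ws ms a c w m \<longleftrightarrow>
     continuous_on {-a..a} w \<and> continuous_on {-a..a} m
     \<and> weak_sol a c w (\<lambda>x. f_w mu (w x) (m x) * chi (w x) (m x))
     \<and> weak_sol a c m (\<lambda>x. f_m r K mu (w x) (m x) * chi (w x) (m x))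
     \<and> w (-a) = ws \<and> m (-a) = ms \<and> w a = 0 \<and> m a = 0"

end

theory Submission
  imports Defs "HOL-Computational_Algebra.Polynomial" "HOL-Real_Asymp.Real_Asymp"
begin

text \<open>Suppose \<open>w + m < K (1 - \<mu>)/2\<close> on \<open>[-a\<^sub>0, a\<^sub>0]\<close>. There \<open>w,m \<ge> 0\<close> gives
  \<open>f\<^sub>w(w,m) \<ge> c w\<close> with \<open>c = (1 - \<mu>)(1 - K/2) > (1 - \<mu>)/2 = (\<pi>/(2a\<^sub>0))\<^sup>2\<close>, the principal
  Dirichlet eigenvalue of \<open>-d\<^sup>2/dx\<^sup>2\<close> on \<open>[-a\<^sub>0, a\<^sub>0]\<close>. A smooth nonnegative test function
  \<open>\<phi>\<close> supported in \<open>[-a\<^sub>0, a\<^sub>0]\<close> with \<open>-\<phi>'' \<le> \<lambda> \<phi>\<close> for some \<open>\<lambda> < c\<close> is obtained by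
  composing \<open>cos (k x)\<close> with a smooth convex ramp that vanishes below \<open>-d\<close>. Testing the weak
  equation for \<open>w\<close> against \<open>\<phi>\<close> yields \<open>c \<integral> w \<phi> \<le> \<integral> w (-\<phi>'') \<le> \<lambda> \<integral> w \<phi>\<close>, which is
  absurd since \<open>\<integral> w \<phi> > 0\<close>.\<close>

section \<open>Smooth functions\<close>

lemma smooth_fun_differentiable: "smooth_fun f \<Longrightarrow> f differentiable (at x)"
  unfolding smooth_fun_def by (metis funpow_0)

lemma smooth_fun_has_derivative: "smooth_fun f \<Longrightarrow> (f has_real_derivative deriv f x) (at x)"
  using smooth_fun_differentiable DERIV_deriv_iff_real_differentiable by blast

lemma smooth_fun_deriv: "smooth_fun f \<Longrightarrow> smooth_fun (deriv f)"
  unfolding smooth_fun_def by (metis funpow_Suc_right o_apply)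

lemma smooth_funI_deriv:
  assumes "\<And>x. f differentiable (at x)" "smooth_fun (deriv f)"
  shows "smooth_fun f"
  unfolding smooth_fun_def
proof (intro allI)
  fix n x
  show "(deriv ^^ n) f differentiable at x"
    using assms unfolding smooth_fun_def
    by (cases n) (auto simp: funpow_Suc_right simp del: funpow.simps)
qed

lemma smooth_fun_continuous_on: "smooth_fun f \<Longrightarrow> continuous_on S ((deriv ^^ n) f)"
  by (intro differentiable_imp_continuous_on differentiable_at_imp_differentiable_on)
     (auto simp: smooth_fun_def)

lemma deriv_eqI: "(\<And>x. (f has_real_derivative f' x) (at x)) \<Longrightarrow> deriv f = f'"
  by (intro ext DERIV_imp_deriv) auto

lemma smooth_fun_deriv_closed_class:
  assumes "P f" "\<And>g. P g \<Longrightarrow> \<exists>g'. (\<forall>x. (g has_real_derivative g' x) (at x)) \<and> P g'"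
  shows "smooth_fun f"
proof -
  have step: "(\<forall>x. g differentiable (at x)) \<and> P (deriv g)" if "P g" for g
  proof -
    obtain g' where g': "\<forall>x. (g has_real_derivative g' x) (at x)" "P g'" using assms(2) \<open>P g\<close> by blast
    then have "deriv g = g'" by (intro deriv_eqI) auto
    with g' show ?thesis unfolding real_differentiable_def by blast
  qed
  have "P ((deriv ^^ n) f)" for n by (induction n) (auto simp: assms(1) step)
  then show ?thesis unfolding smooth_fun_def using step by blast
qed

lemma smooth_fun_const: "smooth_fun (\<lambda>x. c)"
  by (rule smooth_fun_deriv_closed_class[where P = "\<lambda>g. \<exists>c. g = (\<lambda>x. c)"])
     (auto intro!: exI[of _ "\<lambda>x. 0"])

lemma smooth_fun_cos_sin: "smooth_fun (\<lambda>x. A * cos (k * x) + B * sin (k * x))"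
proof (rule smooth_fun_deriv_closed_class[where P = "\<lambda>g. \<exists>A B. g = (\<lambda>x. A * cos (k * x) + B * sin (k * x))"])
  fix g assume "\<exists>A B. g = (\<lambda>x. A * cos (k * x) + B * sin (k * x))"
  then obtain A B where g: "g = (\<lambda>x. A * cos (k * x) + B * sin (k * x))" by blast
  define A' B' where "A' = B * k" and "B' = - A * k"
  have "\<forall>x. (g has_real_derivative (\<lambda>x. A' * cos (k * x) + B' * sin (k * x)) x) (at x)"
    unfolding g A'_def B'_def by (auto intro!: derivative_eq_intros simp: algebra_simps)
  then show "\<exists>g'. (\<forall>x. (g has_real_derivative g' x) (at x))
      \<and> (\<exists>A B. g' = (\<lambda>x. A * cos (k * x) + B * sin (k * x)))"
    by (intro exI[of _ "\<lambda>x. A' * cos (k * x) + B' * sin (k * x)"] conjI) blast+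
qed auto

text \<open>The module over smooth functions spanned by the composites \<open>g \<circ> f\<close>; being closed
  under differentiation, it shows that \<open>g \<circ> f\<close> is smooth.\<close>

inductive smooth_comp_module :: "(real \<Rightarrow> real) \<Rightarrow> (real \<Rightarrow> real) \<Rightarrow> bool" for f where
  comp: "smooth_fun g \<Longrightarrow> smooth_comp_module f (\<lambda>x. g (f x))"
| mult: "smooth_comp_module f h \<Longrightarrow> smooth_fun q \<Longrightarrow> smooth_comp_module f (\<lambda>x. h x * q x)"
| add: "smooth_comp_module f h1 \<Longrightarrow> smooth_comp_module f h2 \<Longrightarrow> smooth_comp_module f (\<lambda>x. h1 x + h2 x)"

lemma smooth_comp_module_has_derivative:
  assumes "smooth_comp_module f h" "smooth_fun f"
  shows "\<exists>h'. (\<forall>x. (h has_real_derivative h' x) (at x)) \<and> smooth_comp_module f h'"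
  using assms(1)
proof induction
  case (comp g)
  have "((\<lambda>x. g (f x)) has_real_derivative deriv g (f x) * deriv f x) (at x)" for x
    using DERIV_chain2[OF smooth_fun_has_derivative smooth_fun_has_derivative] comp assms(2) .
  moreover have "smooth_comp_module f (\<lambda>x. deriv g (f x) * deriv f x)"
    using comp assms(2) by (intro smooth_comp_module.intros smooth_fun_deriv)
  ultimately show ?case by (intro exI[of _ "\<lambda>x. deriv g (f x) * deriv f x"]) auto
next
  case (mult h q)
  then obtain h' where h': "\<forall>x. (h has_real_derivative h' x) (at x)" "smooth_comp_module f h'" by blast
  have "((\<lambda>x. h x * q x) has_real_derivative h' x * q x + h x * deriv q x) (at x)" for x
    using h'(1) smooth_fun_has_derivative[OF mult(2)] by (auto intro!: derivative_eq_intros)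
  moreover have "smooth_comp_module f (\<lambda>x. h' x * q x + h x * deriv q x)"
    using h'(2) mult by (intro smooth_comp_module.intros smooth_fun_deriv)
  ultimately show ?case by (intro exI[of _ "\<lambda>x. h' x * q x + h x * deriv q x"]) auto
next
  case (add h1 h2)
  then obtain d1 d2 where "\<forall>x. (h1 has_real_derivative d1 x) (at x)" "smooth_comp_module f d1"
    "\<forall>x. (h2 has_real_derivative d2 x) (at x)" "smooth_comp_module f d2" by blast
  then show ?case
    by (intro exI[of _ "\<lambda>x. d1 x + d2 x"]) (auto intro!: derivative_eq_intros smooth_comp_module.add)
qed

lemma smooth_fun_compose:
  assumes "smooth_fun g" "smooth_fun f"
  shows "smooth_fun (\<lambda>x. g (f x))"
  using smooth_comp_module.comp[OF assms(1)] smooth_comp_module_has_derivative[OF _ assms(2)]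
  by (rule smooth_fun_deriv_closed_class)

lemma deriv_funpow_cong_open:
  assumes "open U" "\<And>y. y \<in> U \<Longrightarrow> f y = g y" "x \<in> U"
  shows "(deriv ^^ n) f x = (deriv ^^ n) g x"
  using assms(3)
proof (induction n arbitrary: x)
  case 0 then show ?case using assms(2) by simp
next
  case (Suc n)
  have "eventually (\<lambda>y. (deriv ^^ n) f y = (deriv ^^ n) g y) (nhds x)"
    unfolding eventually_nhds using assms(1) Suc by blast
  then show ?case by (simp add: deriv_cong_ev)
qed

lemma smooth_fun_local:
  assumes "\<And>x. \<exists>U g. open U \<and> x \<in> U \<and> smooth_fun g \<and> (\<forall>y\<in>U. f y = g y)"
  shows "smooth_fun f"
  unfolding smooth_fun_def
proof (intro allI)
  fix n x
  obtain U g where U: "open U" "x \<in> U" "smooth_fun g" "\<forall>y\<in>U. f y = g y" using assms by blast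
  have "((deriv ^^ n) g has_real_derivative deriv ((deriv ^^ n) g) x) (at x)"
    using U(3) unfolding smooth_fun_def DERIV_deriv_iff_real_differentiable by blast
  moreover have "(deriv ^^ n) g y = (deriv ^^ n) f y" if "y \<in> U" for y
    using deriv_funpow_cong_open[OF U(1), of g f] U(4) that by auto
  ultimately have "((deriv ^^ n) f has_real_derivative deriv ((deriv ^^ n) g) x) (at x)"
    using has_field_derivative_transform_within_open[OF _ U(1,2)] by blast
  then show "(deriv ^^ n) f differentiable at x" unfolding real_differentiable_def by blast
qed

lemma smooth_fun_truncate:
  fixes g :: "real \<Rightarrow> real"
  assumes g: "smooth_fun g" and LR: "L < R" and vanish: "\<And>x. L < \<bar>x\<bar> \<Longrightarrow> \<bar>x\<bar> < R \<Longrightarrow> g x = 0"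
  defines "h \<equiv> \<lambda>x. if \<bar>x\<bar> \<le> L then g x else 0"
  shows "smooth_fun h" "(deriv ^^ n) h x = (if \<bar>x\<bar> < R then (deriv ^^ n) g x else 0)"
proof -
  let ?U1 = "{y. \<bar>y\<bar> < R}" and ?U2 = "{y. L < \<bar>y\<bar>}"
  have open_U: "open ?U1" "open ?U2"
    by (auto intro!: open_Collect_less continuous_intros)
  have on_U1: "h y = g y" if "y \<in> ?U1" for y using that vanish by (auto simp: h_def)
  have on_U2: "h y = 0" if "y \<in> ?U2" for y using that by (auto simp: h_def)
  have cover: "x \<in> ?U1 \<or> x \<in> ?U2" for x using LR by auto
  show "smooth_fun h"
  proof (rule smooth_fun_local)
    fix x
    from cover show "\<exists>U g. open U \<and> x \<in> U \<and> smooth_fun g \<and> (\<forall>y\<in>U. h y = g y)"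
    proof
      assume "x \<in> ?U1"
      then show ?thesis using open_U(1) on_U1 g by blast
    next
      assume "x \<in> ?U2"
      then show ?thesis using open_U(2) on_U2 smooth_fun_const by blast
    qed
  qed
  show "(deriv ^^ n) h x = (if \<bar>x\<bar> < R then (deriv ^^ n) g x else 0)"
  proof (cases "x \<in> ?U1")
    case True
    then show ?thesis using deriv_funpow_cong_open[OF open_U(1) on_U1] by simp
  next
    case False
    then have "(deriv ^^ n) h x = (deriv ^^ n) (\<lambda>x. 0) x"
      using cover deriv_funpow_cong_open[OF open_U(2), of h "\<lambda>_. 0"] on_U2 by blast
    moreover have "(deriv ^^ n) (\<lambda>x. 0) = (\<lambda>x::real. 0::real)" by (induction n) simp_all
    ultimately show ?thesis using False by simp
  qed
qed

section \<open>A smooth convex ramp\<close>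

text \<open>Every derivative of \<open>flat d p\<close> is again of the form \<open>flat d q\<close>, so \<open>flat d p\<close> is smooth
  although it vanishes identically for \<open>t \<le> -d\<close>.\<close>

definition flat :: "real \<Rightarrow> real poly \<Rightarrow> real \<Rightarrow> real" where
  "flat d p t = (if -d < t then poly p (1 / (t + d)) * exp (- d / (t + d)) else 0)"

definition flat_deriv_poly :: "real \<Rightarrow> real poly \<Rightarrow> real poly" where
  "flat_deriv_poly d p = [:0, 0, 1:] * (smult d p - pderiv p)"

lemma tendsto_poly_times_exp_at_top:
  assumes "d > 0"
  shows "((\<lambda>t::real. poly q t * exp (- d * t)) \<longlongrightarrow> 0) at_top"
proof -
  have "((\<lambda>t::real. t ^ i * exp (- d * t)) \<longlongrightarrow> 0) at_top" for i
    using assms by real_asymp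
  then have "((\<lambda>t. \<Sum>i\<le>degree q. coeff q i * (t ^ i * exp (- d * t))) \<longlongrightarrow> 0) at_top"
    by (intro tendsto_null_sum tendsto_mult_right_zero)
  then show ?thesis by (simp add: poly_altdef sum_distrib_right mult.assoc)
qed

lemma flat_tendsto_zero:
  assumes "d > 0"
  shows "(flat d p \<longlongrightarrow> 0) (at (- d))"
proof (rule filterlim_split_at)
  have "eventually (\<lambda>t. t < - d) (at_left (- d))"
    by (simp add: eventually_at_filter)
  then show "(flat d p \<longlongrightarrow> 0) (at_left (- d))"
    by (intro tendsto_eventually, elim eventually_mono) (auto simp: flat_def)
  have "((\<lambda>s. poly p (inverse s) * exp (- d * inverse s)) \<longlongrightarrow> 0) (at_right 0)"
    using tendsto_poly_times_exp_at_top[OF assms] by (simp add: filterlim_at_top_to_right)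
  then have "((\<lambda>s. flat d p (s + - d)) \<longlongrightarrow> 0) (at_right 0)"
    by (rule Lim_transform_eventually)
       (auto simp: flat_def divide_inverse intro!: eventually_mono[OF eventually_at_right_less[of 0]])
  then show "(flat d p \<longlongrightarrow> 0) (at_right (- d))"
    by (simp add: filterlim_at_right_to_0[of _ _ "- d"])
qed

lemma flat_pCons_zero: "(t + d) * flat d (pCons 0 p) t = flat d p t"
  by (auto simp: flat_def)

lemma flat_has_derivative:
  assumes d: "d > 0"
  shows "(flat d p has_real_derivative flat d (flat_deriv_poly d p) t) (at t)"
proof -
  consider "t = - d" | "t < - d" | "- d < t" by linarith
  then show ?thesis
  proof cases
    case 1
    have "((\<lambda>s. (flat d p s - flat d p (- d)) / (s - - d)) \<longlongrightarrow> 0) (at (- d))"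
      by (rule Lim_transform_eventually[OF flat_tendsto_zero[OF d, of "pCons 0 p"]])
         (auto simp: flat_def eventually_at_filter)
    then show ?thesis using 1 by (simp add: has_field_derivative_iff flat_def)
  next
    case 2
    have "((\<lambda>s. 0) has_real_derivative flat d (flat_deriv_poly d p) t) (at t)"
      using 2 by (simp add: flat_def)
    then show ?thesis
      by (rule has_field_derivative_transform_within_open[of _ _ _ "{..< - d}"])
         (use 2 in \<open>auto simp: flat_def\<close>)
  next
    case 3
    have inv: "((\<lambda>s. 1 / (s + d)) has_real_derivative - ((1 / (t + d))\<^sup>2)) (at t)"
      using 3 by (auto intro!: derivative_eq_intros simp: power2_eq_square)
    have "((\<lambda>s. poly p (1 / (s + d)) * exp (- d * (1 / (s + d)))) has_real_derivative
        poly (pderiv p) (1 / (t + d)) * - ((1 / (t + d))\<^sup>2) * exp (- d * (1 / (t + d)))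
        + exp (- d * (1 / (t + d))) * (- d * - ((1 / (t + d))\<^sup>2)) * poly p (1 / (t + d))) (at t)"
      by (rule DERIV_mult[OF DERIV_chain2[OF poly_DERIV inv]
            DERIV_chain2[OF DERIV_exp DERIV_cmult[OF inv]]])
    moreover have "poly (pderiv p) (1 / (t + d)) * - ((1 / (t + d))\<^sup>2) * exp (- d * (1 / (t + d)))
        + exp (- d * (1 / (t + d))) * (- d * - ((1 / (t + d))\<^sup>2)) * poly p (1 / (t + d))
        = flat d (flat_deriv_poly d p) t"
      using 3 by (simp add: flat_def flat_deriv_poly_def algebra_simps power2_eq_square)
    ultimately have "((\<lambda>s. poly p (1 / (s + d)) * exp (- d * (1 / (s + d)))) has_real_derivative
        flat d (flat_deriv_poly d p) t) (at t)" by simp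
    then show ?thesis
      by (rule has_field_derivative_transform_within_open[of _ _ _ "{- d <..}"])
         (use 3 in \<open>auto simp: flat_def\<close>)
  qed
qed

lemma smooth_fun_flat: "d > 0 \<Longrightarrow> smooth_fun (flat d p)"
  by (rule smooth_fun_deriv_closed_class[where P = "\<lambda>g. \<exists>p. g = flat d p"])
     (use flat_has_derivative in blast)+

text \<open>A smooth substitute for \<open>max 0 (t + d)\<close>.\<close>

definition ramp :: "real \<Rightarrow> real \<Rightarrow> real" where
  "ramp d t = (t + d) * flat d 1 t"

lemma ramp_has_derivative:
  assumes "d > 0"
  shows "(ramp d has_real_derivative flat d [:1, d:] t) (at t)"
proof -
  have "((\<lambda>t. t + d) has_real_derivative 1) (at t)" by (auto intro!: derivative_eq_intros)
  from DERIV_mult[OF this flat_has_derivative[OF assms]]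
  have "((\<lambda>t. (t + d) * flat d 1 t) has_real_derivative
      1 * flat d 1 t + flat d (flat_deriv_poly d 1) t * (t + d)) (at t)" .
  moreover have "flat d (flat_deriv_poly d 1) t * (t + d) = flat d [:0, d:] t"
    using flat_pCons_zero[of t d "[:0, d:]"] by (simp add: flat_deriv_poly_def mult.commute)
  moreover have "flat d 1 t + flat d [:0, d:] t = flat d [:1, d:] t"
    by (simp add: flat_def algebra_simps)
  ultimately show ?thesis by (simp add: ramp_def [abs_def])
qed

lemma smooth_fun_ramp: "d > 0 \<Longrightarrow> smooth_fun (ramp d)"
  by (metis smooth_funI_deriv smooth_fun_flat ramp_has_derivative deriv_eqI real_differentiable_def)

lemma ramp_nonneg: "0 \<le> ramp d t"
  by (simp add: ramp_def flat_def)

lemma ramp_pos: "- d < t \<Longrightarrow> 0 < ramp d t"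
  by (simp add: ramp_def flat_def)

lemma ramp_eq_zero: "t \<le> - d \<Longrightarrow> ramp d t = 0"
  by (simp add: ramp_def flat_def)

lemma ramp_second_deriv_nonneg: "0 \<le> flat d (flat_deriv_poly d [:1, d:]) t"
  by (simp add: flat_def flat_deriv_poly_def pderiv_pCons)

lemma mult_ramp_deriv_le: "t * flat d [:1, d:] t \<le> ramp d t"
proof (cases "- d < t")
  case True
  have "t * (t + 2 * d) \<le> (t + d) * (t + d)" by (simp add: algebra_simps)
  then have "t * (1 + d / (t + d)) \<le> t + d"
    using True by (simp add: field_simps)
  then have "t * (1 + d / (t + d)) * exp (- d / (t + d)) \<le> (t + d) * exp (- d / (t + d))"
    by (rule mult_right_mono) simp
  then show ?thesis
    using True by (simp add: ramp_def flat_def algebra_simps)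
qed (simp add: ramp_def flat_def)

section \<open>A test function below the principal eigenvalue\<close>

lemma minus_second_deriv_comp_cos_le:
  assumes S': "\<And>y. (S has_real_derivative S' y) (at y)"
    and S'': "\<And>y. (S' has_real_derivative S'' y) (at y)"
    and convex: "\<And>y. 0 \<le> S'' y" and mult_deriv_le: "\<And>y. y * S' y \<le> S y"
  shows "- deriv (deriv (\<lambda>x. S (cos (k * x)))) x \<le> k\<^sup>2 * S (cos (k * x))"
proof -
  have cos': "((\<lambda>x. cos (k * x)) has_real_derivative - (k * sin (k * x))) (at x)" for x
    by (auto intro!: derivative_eq_intros)
  have sin': "((\<lambda>x. - (k * sin (k * x))) has_real_derivative - (k * (cos (k * x) * k))) (at x)"
    by (auto intro!: derivative_eq_intros)
  have d1: "((\<lambda>x. S (cos (k * x))) has_real_derivative S' (cos (k * x)) * - (k * sin (k * x))) (at x)" for x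
    by (rule DERIV_chain2[OF S' cos'])
  have d2: "((\<lambda>x. S' (cos (k * x)) * - (k * sin (k * x))) has_real_derivative
      S'' (cos (k * x)) * - (k * sin (k * x)) * - (k * sin (k * x))
      + - (k * (cos (k * x) * k)) * S' (cos (k * x))) (at x)"
    by (rule DERIV_mult[OF DERIV_chain2[OF S'' cos'] sin'])
  have "- deriv (deriv (\<lambda>x. S (cos (k * x)))) x
      = k\<^sup>2 * (cos (k * x) * S' (cos (k * x))) - k\<^sup>2 * ((sin (k * x))\<^sup>2 * S'' (cos (k * x)))"
    unfolding deriv_eqI[OF d1] DERIV_imp_deriv[OF d2] by (simp add: algebra_simps power2_eq_square)
  also have "\<dots> \<le> k\<^sup>2 * S (cos (k * x))"
    using mult_left_mono[OF mult_deriv_le, of "k\<^sup>2" "cos (k * x)"] convex[of "cos (k * x)"]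
    by (simp add: algebra_simps add_increasing2)
  finally show ?thesis .
qed

lemma test_funI_support:
  assumes "smooth_fun \<phi>" "\<And>x. L < \<bar>x\<bar> \<Longrightarrow> \<phi> x = 0" "L < a"
  shows "test_fun a \<phi>"
proof -
  have "{x. \<phi> x \<noteq> 0} \<subseteq> {- L..L}"
    using assms(2) by (force simp flip: abs_le_iff)
  then have supp: "closure {x. \<phi> x \<noteq> 0} \<subseteq> {- L..L}" by (simp add: closure_minimal)
  then have "compact (closure {x. \<phi> x \<noteq> 0})"
    by (meson bounded_subset closed_closure compact_Icc compact_eq_bounded_closed)
  with supp assms(1,3) show ?thesis unfolding test_fun_def by auto
qed

lemma truncated_ramp_cos_subsolution:
  fixes L k :: real
  assumes L: "0 < L" and kL: "pi / 2 < k * L" "k * L < pi"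
  defines "\<phi> \<equiv> \<lambda>x. if \<bar>x\<bar> \<le> L then ramp (- cos (k * L)) (cos (k * x)) else 0"
  shows "smooth_fun \<phi>" "\<And>x. 0 \<le> \<phi> x" "0 < \<phi> 0" "\<And>x. L < \<bar>x\<bar> \<Longrightarrow> \<phi> x = 0"
    "\<And>x. - deriv (deriv \<phi>) x \<le> k\<^sup>2 * \<phi> x"
proof -
  define d where "d = - cos (k * L)"
  define g where "g = (\<lambda>x. ramp d (cos (k * x)))"
  have "0 < k * L" using kL(1) pi_gt_zero by linarith
  then have k: "0 < k" using L by (simp add: zero_less_mult_iff)
  have d: "0 < d" unfolding d_def using cos_lt_zero_pi[of "k * L"] kL by simp
  have LR: "L < pi / k" using kL k by (simp add: field_simps)
  have vanish: "g x = 0" if "L < \<bar>x\<bar>" "\<bar>x\<bar> < pi / k" for x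
  proof -
    have "cos (k * x) = cos (k * \<bar>x\<bar>)" by (cases "0 \<le> x") auto
    also have "\<dots> \<le> cos (k * L)"
      using that k L by (intro cos_monotone_0_pi_le) (auto simp: field_simps)
    finally show ?thesis unfolding g_def d_def by (intro ramp_eq_zero) simp
  qed
  have g_smooth: "smooth_fun g"
    unfolding g_def using smooth_fun_compose[OF smooth_fun_ramp[OF d] smooth_fun_cos_sin[of 1 k 0]] by simp
  have \<phi>_eq: "\<phi> = (\<lambda>x. if \<bar>x\<bar> \<le> L then g x else 0)" unfolding \<phi>_def g_def d_def ..
  note trunc = smooth_fun_truncate[OF g_smooth LR vanish, folded \<phi>_eq]
  have g_sub: "- deriv (deriv g) x \<le> k\<^sup>2 * g x" for x
    unfolding g_def
    by (rule minus_second_deriv_comp_cos_le[OF ramp_has_derivative flat_has_derivative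
          ramp_second_deriv_nonneg mult_ramp_deriv_le]) (use d in auto)
  show "smooth_fun \<phi>" by (rule trunc(1))
  show "0 \<le> \<phi> x" for x using ramp_nonneg by (simp add: \<phi>_def)
  show "0 < \<phi> 0" using L d by (simp add: \<phi>_def d_def ramp_pos)
  show "L < \<bar>x\<bar> \<Longrightarrow> \<phi> x = 0" for x by (simp add: \<phi>_def)
  show "- deriv (deriv \<phi>) x \<le> k\<^sup>2 * \<phi> x" for x
    using trunc(2)[of 2 x] trunc(2)[of 0 x] g_sub[of x] by (simp add: numeral_2_eq_2 split: if_splits)
qed

lemma test_fun_subsolution_exists:
  assumes L: "0 < L" "L < a" and lam: "(pi / (2 * L))\<^sup>2 < lam"
  obtains \<phi> where "test_fun a \<phi>" "\<And>x. 0 \<le> \<phi> x" "0 < \<phi> 0" "\<And>x. L < \<bar>x\<bar> \<Longrightarrow> \<phi> x = 0"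
    "\<And>x. - deriv (deriv \<phi>) x \<le> lam * \<phi> x"
proof -
  define k where "k = min (sqrt lam) (3 * pi / (4 * L))"
  have "pi / (2 * L) < 3 * pi / (4 * L)" using L by (simp add: field_simps)
  then have k_gt: "pi / (2 * L) < k" using real_less_rsqrt[OF lam] unfolding k_def by simp
  have "k \<le> 3 * pi / (4 * L)" by (simp add: k_def)
  then have kL: "pi / 2 < k * L" "k * L < pi"
    using mult_strict_right_mono[OF k_gt L(1)] L by (simp_all add: field_simps)
  have "0 < k" using k_gt L by (smt (verit) divide_pos_pos pi_gt_zero)
  then have "k\<^sup>2 \<le> (sqrt lam)\<^sup>2" by (intro power_mono) (simp_all add: k_def)
  also have "\<dots> = lam" using lam by (smt (verit) real_sqrt_pow2 zero_le_power2)
  finally have k2: "k\<^sup>2 \<le> lam" .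
  note \<phi> = truncated_ramp_cos_subsolution[OF L(1) kL]
  show ?thesis
    by (rule that[OF test_funI_support[OF \<phi>(1,4) L(2)] \<phi>(2,3,4)
          order_trans[OF \<phi>(5) mult_right_mono[OF k2 \<phi>(2)]]])
qed

section \<open>Comparison with the principal eigenvalue\<close>

lemma weak_sol_growth_le_eigenvalue:
  assumes sol: "weak_sol a 0 u F" and \<phi>: "test_fun a \<phi>"
    and cont: "continuous_on {-a..a} u" "continuous_on {-a..a} F"
    and u_nonneg: "\<And>x. x \<in> {-a..a} \<Longrightarrow> 0 \<le> u x" and \<phi>_nonneg: "\<And>x. 0 \<le> \<phi> x"
    and sub: "\<And>x. - deriv (deriv \<phi>) x \<le> lam * \<phi> x"
    and growth: "\<And>x. x \<in> {-a..a} \<Longrightarrow> c * (u x * \<phi> x) \<le> F x * \<phi> x"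
    and x0: "x0 \<in> {-a..a}" "0 < u x0 * \<phi> x0"
  shows "c \<le> lam"
proof -
  have smooth: "smooth_fun \<phi>" using \<phi> by (simp add: test_fun_def)
  have c\<phi>: "continuous_on {-a..a} \<phi>" "continuous_on {-a..a} (deriv (deriv \<phi>))"
    using smooth_fun_continuous_on[OF smooth, of _ 0] smooth_fun_continuous_on[OF smooth, of _ 2]
    by (simp_all add: numeral_2_eq_2)
  have u\<phi>: "continuous_on {-a..a} (\<lambda>x. u x * \<phi> x)" by (intro continuous_intros cont c\<phi>)
  define J where "J = integral {-a..a} (\<lambda>x. u x * \<phi> x)"
  have nn: "\<And>x. x \<in> {-a..a} \<Longrightarrow> 0 \<le> u x * \<phi> x" using u_nonneg \<phi>_nonneg by simp
  have "x0 \<in> closure {x. \<phi> x \<noteq> 0}" using x0 closure_subset by fastforce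
  then have "- a < a" using \<phi> unfolding test_fun_def by auto
  then have "J \<noteq> 0"
    using integral_eq_0_iff[OF u\<phi> _ nn] x0 unfolding J_def by force
  moreover have "0 \<le> J"
    unfolding J_def by (rule integral_nonneg[OF integrable_continuous_interval[OF u\<phi>] nn])
  ultimately have J: "0 < J" by simp
  have "c * J = integral {-a..a} (\<lambda>x. c * (u x * \<phi> x))"
    unfolding J_def by (simp add: integral_mult_right)
  also have "\<dots> \<le> integral {-a..a} (\<lambda>x. F x * \<phi> x)"
    by (intro integral_le integrable_continuous_interval continuous_intros cont c\<phi> growth)
  also have "\<dots> = integral {-a..a} (\<lambda>x. u x * - deriv (deriv \<phi>) x)"
    using sol \<phi> unfolding weak_sol_def by simp
  also have "\<dots> \<le> integral {-a..a} (\<lambda>x. lam * (u x * \<phi> x))"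
    by (intro integral_le integrable_continuous_interval continuous_intros cont c\<phi>)
       (use mult_left_mono[OF sub u_nonneg] in \<open>simp add: algebra_simps\<close>)
  also have "\<dots> = lam * J"
    unfolding J_def by (simp add: integral_mult_right)
  finally show ?thesis using J by simp
qed

section \<open>The localized problem\<close>

lemma weak_sol_cong:
  assumes "\<And>x. x \<in> {-a..a} \<Longrightarrow> F x = G x"
  shows "weak_sol a c u F \<longleftrightarrow> weak_sol a c u G"
proof -
  have "integral {-a..a} (\<lambda>x. F x * \<phi> x) = integral {-a..a} (\<lambda>x. G x * \<phi> x)" for \<phi>
    using assms by (intro integral_cong) auto
  then show ?thesis unfolding weak_sol_def by simp
qed

lemma solves_Pa_nonneg:
  assumes "solves_Pa r K mu ws ms a c w m" "0 \<le> ws" "0 \<le> ms"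
    and "\<forall>x\<in>{-a<..<a}. 0 < w x \<and> 0 < m x" and "x \<in> {-a..a}"
  shows "0 \<le> w x" "0 \<le> m x"
proof -
  have "x = -a \<or> x = a \<or> x \<in> {-a<..<a}" using assms(5) by auto
  then show "0 \<le> w x" "0 \<le> m x" using assms(1-4) unfolding solves_Pa_def by (auto simp: less_imp_le)
qed

lemma f_w_lower_bound:
  assumes "0 \<le> w" "0 \<le> m" "0 \<le> mu" "w + m \<le> s"
  shows "(1 - mu - s) * w \<le> f_w mu w m"
proof -
  have "(1 - mu - s) * w \<le> (1 - mu - (w + m)) * w"
    using assms by (intro mult_right_mono) auto
  also have "\<dots> \<le> f_w mu w m" using assms by (simp add: f_w_def algebra_simps)
  finally show ?thesis .
qed

theorem mainTheorem7:
  fixes r K mu ws ms a :: real and w m :: "real \<Rightarrow> real"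
  assumes A1: "assumption1 r K mu"
    and eq_star: "0 < ws" "ws < 1" "0 < ms" "ms < K" "f_w mu ws ms = 0" "f_m r K mu ws ms = 0"
    and a_big: "a > pi / sqrt (2 * (1 - mu))"
    and sol: "solves_Pa r K mu ws ms a 0 w m"
    and pos: "\<forall>x\<in>{-a<..<a}. 0 < w x \<and> 0 < m x"
  shows "(SUP x\<in>{- (pi / sqrt (2 * (1 - mu)))..pi / sqrt (2 * (1 - mu))}. w x + m x) \<ge> K / 2 * (1 - mu)"
proof (rule ccontr)
  define L where "L = pi / sqrt (2 * (1 - mu))"
  define c where "c = 1 - mu - K / 2 * (1 - mu)"
  assume "\<not> ?thesis"
  then have small: "(SUP x\<in>{-L..L}. w x + m x) < K / 2 * (1 - mu)" unfolding L_def by simp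
  have K: "K < 1" and mu: "0 < mu" "mu < 1" using A1 unfolding assumption1_def by auto
  have L: "0 < L" "L < a" using a_big mu unfolding L_def by auto
  have "(pi / (2 * L))\<^sup>2 = (1 - mu) / 2" using mu unfolding L_def by (simp add: power_divide)
  also have "\<dots> < c" using mult_strict_left_mono[OF K, of "1 - mu"] mu unfolding c_def by (simp add: field_simps)
  finally obtain lam where lam: "(pi / (2 * L))\<^sup>2 < lam" "lam < c" using dense by blast
  obtain \<phi> where \<phi>: "test_fun a \<phi>" "\<And>x. 0 \<le> \<phi> x" "0 < \<phi> 0" "\<And>x. L < \<bar>x\<bar> \<Longrightarrow> \<phi> x = 0"
    "\<And>x. - deriv (deriv \<phi>) x \<le> lam * \<phi> x"
    using test_fun_subsolution_exists[OF L lam(1)] by blast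
  note nonneg = solves_Pa_nonneg[OF sol _ _ pos] eq_star(1,3)
  have cont: "continuous_on {-a..a} w" "continuous_on {-a..a} m"
    and weak_chi: "weak_sol a 0 w (\<lambda>x. f_w mu (w x) (m x) * chi (w x) (m x))"
    using sol unfolding solves_Pa_def by auto
  have weak: "weak_sol a 0 w (\<lambda>x. f_w mu (w x) (m x))"
    by (rule weak_sol_cong[THEN iffD1, OF _ weak_chi]) (use nonneg in \<open>auto simp: chi_def\<close>)
  have growth: "c * (w x * \<phi> x) \<le> f_w mu (w x) (m x) * \<phi> x" if x: "x \<in> {-a..a}" for x
  proof (cases "\<bar>x\<bar> \<le> L")
    case True
    have "w x + m x \<le> (SUP x\<in>{-L..L}. w x + m x)"
      using True L continuous_on_subset[OF continuous_on_add[OF cont], of "{-L..L}"]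
      by (intro cSUP_upper bounded_imp_bdd_above compact_imp_bounded compact_continuous_image) auto
    then have "c * w x \<le> f_w mu (w x) (m x)"
      unfolding c_def using small mu nonneg x by (intro f_w_lower_bound) auto
    then have "c * w x * \<phi> x \<le> f_w mu (w x) (m x) * \<phi> x" using \<phi>(2) by (rule mult_right_mono)
    then show ?thesis by (simp add: mult.assoc)
  qed (simp add: \<phi>(4))
  have F_cont: "continuous_on {-a..a} (\<lambda>x. f_w mu (w x) (m x))"
    unfolding f_w_def by (intro continuous_intros cont)
  have "0 < w 0 * \<phi> 0" using pos L \<phi>(3) by simp
  then have "c \<le> lam"
    using L nonneg by (intro weak_sol_growth_le_eigenvalue[OF weak \<phi>(1) cont(1) F_cont _ \<phi>(2,5) growth]) auto
  with lam show False by simp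
qed

end
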